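(* Let $X$ be a real Banach space. The following statements are equivalent. (1) $X$ is LUR. (2) $r(P_{S_X}(x,\frac1n),P_{S_X}(x',\frac1n))\to\left\|\frac{x}{\|x\|}-\frac{x'}{\|x'\|}\right\|$ for every $x,x'\in X\setminus\{0\}$. (3) $\mathrm{diam}(P_{S_X}(x,\frac1n))\to0$ for every $x\in X\setminus\{0\}$. (4) For every $x\in X\setminus\{0\}$, every minimizing sequence in $S_X$ for $x$ converges to $\frac{x}{\|x\|}$. (5) For every $x\in X\setminus\{0\}$, $P_{S_X}(x)=\{\frac{x}{\|x\|}\}$ and $P_{S_X}(x,\frac1n)\xrightarrow{V}P_{S_X}(x)$. (6) For every $x\in X\setminus\{0\}$, $P_{S_X}(x)=\{\frac{x}{\|x\|}\}$ and $P_{S_X}(x,\frac1n)\xrightarrow{H}P_{S_X}(x)$. (7) $S_X$ is strongly Chebyshev on $X\setminus\{0\}$.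
   Context: $B_X,S_X$ are the closed unit ball and unit sphere of $X$. For non-empty closed $A\subseteq X$, $x\in X$, $\delta\ge0$: $P_A(x,\delta)=\{y\in A:\|x-y\|\le\inf_{z\in A}\|x-z\|+\delta\}$, $P_A(x)=P_A(x,0)$. A minimizing sequence in $A$ for $x$ is a sequence $(y_n)$ in $A$ with $\|x-y_n\|\to\inf_{z\in A}\|x-z\|$. $A$ is strongly Chebyshev on $D$ if for each $x\in D$, $P_A(x)$ is a singleton and for every $\epsilon>0$ there is $\delta>0$ with $P_A(x,\delta)\subseteq P_A(x)+\epsilon B_X$. For non-empty bounded $A,B$, $r(A,B)=\sup\{\|a-b\|:a\in A,b\in B\}$. $X$ is LUR if $x_n\to x$ whenever $x\in S_X$, $(x_n)\subseteq S_X$ and $\|\frac{x_n+x}{2}\|\to1$. For closed bounded sets $C_n,C_0$: $C_n\xrightarrow{V}C_0$ means both (a) for every open $U\supseteq C_0$, eventually $C_n\subseteq U$, and (b) for every open $U$ with $C_0\cap U\ne\emptyset$, eventually $C_n\cap U\neq\emptyset$; $C_n\xrightarrow{H}C_0$ means for every $\epsilon>0$, eventually $C_n\subseteq C_0+\epsilon B_X$ and $C_0\subseteq C_n+\epsilon B_X$. *)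

theory Defs
  imports "HOL-Analysis.Analysis"
begin

definition approx_proj :: "'a::real_normed_vector set \<Rightarrow> 'a \<Rightarrow> real \<Rightarrow> 'a set" where
  "approx_proj A x \<delta> = {y \<in> A. norm (x - y) \<le> (INF z\<in>A. norm (x - z)) + \<delta>}"

definition metric_proj :: "'a::real_normed_vector set \<Rightarrow> 'a \<Rightarrow> 'a set" where
  "metric_proj A x = approx_proj A x 0"

definition minimizing_seq :: "'a::real_normed_vector set \<Rightarrow> 'a \<Rightarrow> (nat \<Rightarrow> 'a) \<Rightarrow> bool" where
  "minimizing_seq A x y \<longleftrightarrow> (\<forall>n. y n \<in> A) \<and>
     ((\<lambda>n. norm (x - y n)) \<longlonglongrightarrow> (INF z\<in>A. norm (x - z)))"

definition enlarge :: "'a::real_normed_vector set \<Rightarrow> real \<Rightarrow> 'a set" where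
  "enlarge A \<epsilon> = {a + b | a b. a \<in> A \<and> b \<in> cball 0 \<epsilon>}"

definition strongly_chebyshev_on :: "'a::real_normed_vector set \<Rightarrow> 'a set \<Rightarrow> bool" where
  "strongly_chebyshev_on A D \<longleftrightarrow> (\<forall>x\<in>D. (\<exists>y. metric_proj A x = {y}) \<and>
     (\<forall>\<epsilon>>0. \<exists>\<delta>>0. approx_proj A x \<delta> \<subseteq> enlarge (metric_proj A x) \<epsilon>))"

definition rad :: "'a::real_normed_vector set \<Rightarrow> 'a set \<Rightarrow> real" where
  "rad A B = Sup {norm (a - b) | a b. a \<in> A \<and> b \<in> B}"

definition LUR :: "'a::real_normed_vector itself \<Rightarrow> bool" where
  "LUR _ \<longleftrightarrow> (\<forall>(x::'a) (xs::nat \<Rightarrow> 'a). x \<in> sphere 0 1 \<and> (\<forall>n. xs n \<in> sphere 0 1) \<and>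
      ((\<lambda>n. norm ((xs n + x) /\<^sub>R 2)) \<longlonglongrightarrow> 1) \<longrightarrow> xs \<longlonglongrightarrow> x)"

definition vietoris_conv :: "(nat \<Rightarrow> 'a::topological_space set) \<Rightarrow> 'a set \<Rightarrow> bool" where
  "vietoris_conv C C0 \<longleftrightarrow>
     (\<forall>U. open U \<and> C0 \<subseteq> U \<longrightarrow> (\<forall>\<^sub>F n in sequentially. C n \<subseteq> U)) \<and>
     (\<forall>U. open U \<and> C0 \<inter> U \<noteq> {} \<longrightarrow> (\<forall>\<^sub>F n in sequentially. C n \<inter> U \<noteq> {}))"

definition hausdorff_conv :: "(nat \<Rightarrow> 'a::real_normed_vector set) \<Rightarrow> 'a set \<Rightarrow> bool" where
  "hausdorff_conv C C0 \<longleftrightarrow> (\<forall>\<epsilon>>0. \<forall>\<^sub>F n in sequentially.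
     C n \<subseteq> enlarge C0 \<epsilon> \<and> C0 \<subseteq> enlarge (C n) \<epsilon>)"

end

(*
  Everything reduces, pointwise in x \<noteq> 0, to one uniform condition: the approximate
  projections P_S(x,\<delta>) shrink to the point x/\<parallel>x\<parallel> as \<delta> \<rightarrow> 0 (approx_proj_shrinks).
  For an arbitrary set A and a best approximation u of x, this condition is equivalent to
  convergence of every minimizing sequence to u, to diam P_A(x,1/n) \<rightarrow> 0, to Vietoris and to
  Hausdorff convergence of P_A(x,1/n) to {u}, and to strong Chebyshevness at x; the radius
  condition reduces to the diameter one because r(C,C) = diam C.

  LUR enters only through minimizing sequences for the sphere. If y lies in P_S(x,\<delta>), then
  \<parallel>x/\<parallel>x\<parallel> + y\<parallel> \<ge> 2 - max 1 (1/\<parallel>x\<parallel>) \<delta>, so the midpoints of a minimizing sequence and x/\<parallel>x\<parallel>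
  have norms tending to 1. Conversely, if \<parallel>(y_n + u)/2\<parallel> \<rightarrow> 1 with u and y_n on the sphere,
  the midpoints pushed radially onto the sphere form a minimizing sequence for u/2.
*)
theory Submission
  imports Defs
begin

section \<open>Approximate projections onto an arbitrary set\<close>

definition approx_proj_shrinks :: "'a::real_normed_vector set \<Rightarrow> 'a \<Rightarrow> 'a \<Rightarrow> bool" where
  "approx_proj_shrinks A x u \<longleftrightarrow> (\<forall>\<epsilon>>0. \<exists>\<delta>>0. approx_proj A x \<delta> \<subseteq> ball u \<epsilon>)"

lemma approx_proj_infdist: "approx_proj A x \<delta> = {y \<in> A. dist x y \<le> infdist x A + \<delta>}"
  unfolding approx_proj_def by (cases "A = {}") (simp_all add: infdist_notempty dist_norm)

lemma minimizing_seq_infdist: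
  "minimizing_seq A x y \<longleftrightarrow> (\<forall>n. y n \<in> A) \<and> (\<lambda>n. dist x (y n)) \<longlonglongrightarrow> infdist x A"
  unfolding minimizing_seq_def by (cases "A = {}") (simp_all add: infdist_notempty dist_norm)

lemma approx_proj_mono: "\<delta> \<le> \<delta>' \<Longrightarrow> approx_proj A x \<delta> \<subseteq> approx_proj A x \<delta>'"
  unfolding approx_proj_def by auto

lemma metric_proj_subset_approx_proj: "0 \<le> \<delta> \<Longrightarrow> metric_proj A x \<subseteq> approx_proj A x \<delta>"
  unfolding metric_proj_def by (rule approx_proj_mono)

lemma bounded_approx_proj: "bounded (approx_proj A x \<delta>)"
  unfolding bounded_def approx_proj_infdist by (intro exI[of _ x] exI[of _ "infdist x A + \<delta>"]) auto

lemma approx_proj_shrinks_sequentially: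
  "approx_proj_shrinks A x u \<longleftrightarrow>
     (\<forall>\<epsilon>>0. \<forall>\<^sub>F n in sequentially. approx_proj A x (1 / real n) \<subseteq> ball u \<epsilon>)"
proof (intro iffI allI impI)
  fix \<epsilon> :: real
  assume "approx_proj_shrinks A x u" and "\<epsilon> > 0"
  then obtain \<delta> where "\<delta> > 0" and \<delta>: "approx_proj A x \<delta> \<subseteq> ball u \<epsilon>"
    unfolding approx_proj_shrinks_def by blast
  then have "\<forall>\<^sub>F n in sequentially. 1 / real n < \<delta>"
    using order_tendstoD(2)[OF lim_1_over_n] by blast
  then show "\<forall>\<^sub>F n in sequentially. approx_proj A x (1 / real n) \<subseteq> ball u \<epsilon>"
  proof eventually_elim
    case (elim n)
    then have "approx_proj A x (1 / real n) \<subseteq> approx_proj A x \<delta>"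
      by (intro approx_proj_mono) simp
    with \<delta> show ?case
      by blast
  qed
next
  assume seq: "\<forall>\<epsilon>>0. \<forall>\<^sub>F n in sequentially. approx_proj A x (1 / real n) \<subseteq> ball u \<epsilon>"
  show "approx_proj_shrinks A x u"
    unfolding approx_proj_shrinks_def
  proof (intro allI impI)
    fix \<epsilon> :: real
    assume "\<epsilon> > 0"
    then obtain N where N: "\<forall>n\<ge>N. approx_proj A x (1 / real n) \<subseteq> ball u \<epsilon>"
      using seq unfolding eventually_sequentially by blast
    show "\<exists>\<delta>>0. approx_proj A x \<delta> \<subseteq> ball u \<epsilon>"
    proof (intro exI conjI)
      show "1 / real (Suc N) > 0"
        by simp
      show "approx_proj A x (1 / real (Suc N)) \<subseteq> ball u \<epsilon>"
        by (rule N[rule_format]) simp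
    qed
  qed
qed

lemma metric_proj_eq_singleton_if_shrinks:
  assumes "u \<in> metric_proj A x" and "approx_proj_shrinks A x u"
  shows "metric_proj A x = {u}"
proof -
  have "y = u" if y: "y \<in> metric_proj A x" for y
  proof (rule ccontr)
    assume "y \<noteq> u"
    then have "dist u y > 0" by simp
    then obtain \<delta> where "\<delta> > 0" and "approx_proj A x \<delta> \<subseteq> ball u (dist u y)"
      using assms(2) unfolding approx_proj_shrinks_def by blast
    with y metric_proj_subset_approx_proj[of \<delta> A x] show False by fastforce
  qed
  with assms(1) show ?thesis by blast
qed

lemma minimizing_seq_tendsto_if_approx_proj_shrinks:
  assumes shrinks: "approx_proj_shrinks A x u" and "minimizing_seq A x y"
  shows "y \<longlonglongrightarrow> u"
proof (rule tendstoI)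
  have yA: "\<And>n. y n \<in> A" and lim: "(\<lambda>n. dist x (y n)) \<longlonglongrightarrow> infdist x A"
    using assms(2) by (simp_all add: minimizing_seq_infdist)
  fix \<epsilon> :: real
  assume "\<epsilon> > 0"
  then obtain \<delta> where "\<delta> > 0" and \<delta>: "approx_proj A x \<delta> \<subseteq> ball u \<epsilon>"
    using shrinks unfolding approx_proj_shrinks_def by blast
  then have "\<forall>\<^sub>F n in sequentially. dist x (y n) < infdist x A + \<delta>"
    using order_tendstoD(2)[OF lim] by simp
  then show "\<forall>\<^sub>F n in sequentially. dist (y n) u < \<epsilon>"
  proof eventually_elim
    case (elim n)
    then have "y n \<in> approx_proj A x \<delta>"
      using yA by (simp add: approx_proj_infdist)
    with \<delta> show ?case
      by (auto simp: dist_commute)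
  qed
qed

lemma approx_proj_shrinks_if_minimizing_seq_tendsto:
  assumes conv: "\<And>y. minimizing_seq A x y \<Longrightarrow> y \<longlonglongrightarrow> u"
  shows "approx_proj_shrinks A x u"
proof (rule ccontr)
  assume "\<not> approx_proj_shrinks A x u"
  then obtain \<epsilon> where "\<epsilon> > 0" and far_all: "\<forall>\<delta>>0. \<exists>y\<in>approx_proj A x \<delta>. y \<notin> ball u \<epsilon>"
    unfolding approx_proj_shrinks_def by blast
  have "inverse (real (Suc n)) > 0" for n
    by simp
  with far_all have "\<forall>n. \<exists>y. y \<in> approx_proj A x (inverse (real (Suc n))) \<and> y \<notin> ball u \<epsilon>"
    by blast
  then obtain y where y: "\<And>n. y n \<in> approx_proj A x (inverse (real (Suc n)))"
    and far: "\<And>n. y n \<notin> ball u \<epsilon>"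
    by metis
  have yA: "\<And>n. y n \<in> A" and near: "\<And>n. dist x (y n) \<le> infdist x A + inverse (real (Suc n))"
    using y by (simp_all add: approx_proj_infdist)
  have "(\<lambda>n. dist x (y n)) \<longlonglongrightarrow> infdist x A"
    by (rule tendsto_sandwich[OF always_eventually always_eventually tendsto_const
          LIMSEQ_inverse_real_of_nat_add]) (use yA near in \<open>auto intro: infdist_le\<close>)
  with yA have "y \<longlonglongrightarrow> u"
    using conv by (simp add: minimizing_seq_infdist)
  with \<open>\<epsilon> > 0\<close> obtain N where "\<forall>n\<ge>N. norm (y n - u) < \<epsilon>"
    using LIMSEQ_D by blast
  with far[of N] show False
    by (simp add: dist_norm norm_minus_commute)
qed

lemma approx_proj_shrinks_iff_minimizing_seq:
  "approx_proj_shrinks A x u \<longleftrightarrow> (\<forall>y. minimizing_seq A x y \<longrightarrow> y \<longlonglongrightarrow> u)"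
  using minimizing_seq_tendsto_if_approx_proj_shrinks approx_proj_shrinks_if_minimizing_seq_tendsto
  by blast

lemma diameter_le_if_subset_cball:
  fixes u :: "'a::real_normed_vector"
  assumes "C \<subseteq> cball u r" "0 \<le> r"
  shows "diameter C \<le> 2 * r"
proof (rule diameter_le)
  show "C \<noteq> {} \<or> 0 \<le> 2 * r"
    using assms(2) by simp
  fix a b
  assume "a \<in> C" "b \<in> C"
  with assms(1) have "dist u a \<le> r" "dist u b \<le> r"
    by auto
  then have "dist a b \<le> 2 * r"
    using dist_triangle[of a b u] by (simp add: dist_commute)
  then show "norm (a - b) \<le> 2 * r"
    by (simp add: dist_norm)
qed

lemma approx_proj_shrinks_iff_diameter:
  assumes "u \<in> metric_proj A x"
  shows "approx_proj_shrinks A x u \<longleftrightarrow> (\<lambda>n. diameter (approx_proj A x (1 / real n))) \<longlonglongrightarrow> 0"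
proof -
  let ?P = "\<lambda>n. approx_proj A x (1 / real n)"
  have u: "u \<in> ?P n" for n
    using assms metric_proj_subset_approx_proj[of "1 / real n" A x] by auto
  show ?thesis
  proof
    assume shrinks: "approx_proj_shrinks A x u"
    show "(\<lambda>n. diameter (?P n)) \<longlonglongrightarrow> 0"
    proof (rule tendstoI)
      fix \<epsilon> :: real
      assume "\<epsilon> > 0"
      then have "\<forall>\<^sub>F n in sequentially. ?P n \<subseteq> ball u (\<epsilon> / 3)"
        using shrinks unfolding approx_proj_shrinks_sequentially by simp
      then show "\<forall>\<^sub>F n in sequentially. dist (diameter (?P n)) 0 < \<epsilon>"
      proof eventually_elim
        case (elim n)
        then have "diameter (?P n) \<le> 2 * (\<epsilon> / 3)"
          using \<open>\<epsilon> > 0\<close> by (intro diameter_le_if_subset_cball[of _ u]) auto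
        then show ?case
          using diameter_ge_0[OF bounded_approx_proj, of A x "1 / real n"] \<open>\<epsilon> > 0\<close> by simp
      qed
    qed
  next
    assume lim: "(\<lambda>n. diameter (?P n)) \<longlonglongrightarrow> 0"
    show "approx_proj_shrinks A x u"
      unfolding approx_proj_shrinks_sequentially
    proof (intro allI impI)
      fix \<epsilon> :: real
      assume "\<epsilon> > 0"
      with lim have "\<forall>\<^sub>F n in sequentially. diameter (?P n) < \<epsilon>"
        by (rule order_tendstoD(2))
      then show "\<forall>\<^sub>F n in sequentially. ?P n \<subseteq> ball u \<epsilon>"
      proof eventually_elim
        case (elim n)
        show ?case
        proof
          fix y
          assume "y \<in> ?P n"
          then have "dist u y \<le> diameter (?P n)"
            using u by (intro diameter_bounded_bound[OF bounded_approx_proj])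
          with elim show "y \<in> ball u \<epsilon>"
            by simp
        qed
      qed
    qed
  qed
qed

lemma dist_le_rad:
  assumes "bounded A" "bounded B" "a \<in> A" "b \<in> B"
  shows "dist a b \<le> rad A B"
proof -
  obtain M N where M: "\<And>a. a \<in> A \<Longrightarrow> norm a \<le> M" and N: "\<And>b. b \<in> B \<Longrightarrow> norm b \<le> N"
    using assms(1,2) unfolding bounded_iff by blast
  have bdd: "bdd_above {norm (a - b) |a b. a \<in> A \<and> b \<in> B}"
  proof (rule bdd_aboveI)
    fix t
    assume "t \<in> {norm (a - b) |a b. a \<in> A \<and> b \<in> B}"
    then obtain a b where "t = norm (a - b)" "a \<in> A" "b \<in> B"
      by blast
    with M[of a] N[of b] norm_triangle_ineq4[of a b] show "t \<le> M + N"
      by linarith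
  qed
  then show ?thesis
    unfolding rad_def dist_norm using assms(3,4) by (intro cSup_upper[OF _ bdd]) blast
qed

lemma rad_le:
  assumes "A \<noteq> {}" "B \<noteq> {}" "\<And>a b. a \<in> A \<Longrightarrow> b \<in> B \<Longrightarrow> dist a b \<le> c"
  shows "rad A B \<le> c"
  unfolding rad_def using assms by (intro cSup_least) (auto simp: dist_norm)

lemma rad_self_eq_diameter:
  assumes "bounded A" "A \<noteq> {}"
  shows "rad A A = diameter A"
proof (rule antisym)
  show "rad A A \<le> diameter A"
    using assms by (intro rad_le diameter_bounded_bound) auto
  show "diameter A \<le> rad A A"
  proof (rule diameter_le)
    show "A \<noteq> {} \<or> 0 \<le> rad A A"
      using assms(2) by blast
    fix a b
    assume "a \<in> A" "b \<in> A"
    with assms(1) have "dist a b \<le> rad A A"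
      by (intro dist_le_rad)
    then show "norm (a - b) \<le> rad A A"
      by (simp add: dist_norm)
  qed
qed

lemma rad_approx_proj_tendsto:
  assumes "u \<in> metric_proj A x" "u' \<in> metric_proj A x'"
    and "approx_proj_shrinks A x u" "approx_proj_shrinks A x' u'"
  shows "(\<lambda>n. rad (approx_proj A x (1 / real n)) (approx_proj A x' (1 / real n))) \<longlonglongrightarrow> dist u u'"
proof (rule tendstoI)
  let ?P = "\<lambda>n. approx_proj A x (1 / real n)" and ?P' = "\<lambda>n. approx_proj A x' (1 / real n)"
  have u: "u \<in> ?P n" and u': "u' \<in> ?P' n" for n
    using assms(1,2) metric_proj_subset_approx_proj[of "1 / real n"] by auto
  fix \<epsilon> :: real
  assume "\<epsilon> > 0"
  then have "\<forall>\<^sub>F n in sequentially. ?P n \<subseteq> ball u (\<epsilon> / 3) \<and> ?P' n \<subseteq> ball u' (\<epsilon> / 3)"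
    using assms(3,4) unfolding approx_proj_shrinks_sequentially by (simp add: eventually_conj)
  then show "\<forall>\<^sub>F n in sequentially. dist (rad (?P n) (?P' n)) (dist u u') < \<epsilon>"
  proof eventually_elim
    case (elim n)
    have "dist u u' \<le> rad (?P n) (?P' n)"
      using u u' by (intro dist_le_rad bounded_approx_proj)
    moreover have "rad (?P n) (?P' n) \<le> dist u u' + 2 * \<epsilon> / 3"
    proof (rule rad_le)
      show "?P n \<noteq> {}" "?P' n \<noteq> {}"
        using u u' by blast+
      fix a b
      assume "a \<in> ?P n" "b \<in> ?P' n"
      with elim have "dist u a < \<epsilon> / 3" "dist u' b < \<epsilon> / 3"
        by auto
      then show "dist a b \<le> dist u u' + 2 * \<epsilon> / 3"
        using dist_triangle[of a b u] dist_triangle[of u b u'] by (simp add: dist_commute)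
    qed
    ultimately show ?case
      using \<open>\<epsilon> > 0\<close> by (simp add: dist_real_def)
  qed
qed

lemma approx_proj_shrinks_iff_vietoris:
  assumes "u \<in> metric_proj A x"
  shows "approx_proj_shrinks A x u \<longleftrightarrow>
    metric_proj A x = {u} \<and> vietoris_conv (\<lambda>n. approx_proj A x (1 / real n)) (metric_proj A x)"
proof
  let ?P = "\<lambda>n. approx_proj A x (1 / real n)"
  assume shrinks: "approx_proj_shrinks A x u"
  have "\<forall>\<^sub>F n in sequentially. ?P n \<subseteq> W" if "open W" "u \<in> W" for W
  proof -
    obtain \<epsilon> where "\<epsilon> > 0" "ball u \<epsilon> \<subseteq> W"
      using \<open>open W\<close> \<open>u \<in> W\<close> open_contains_ball by blast
    then have "\<forall>\<^sub>F n in sequentially. ?P n \<subseteq> ball u \<epsilon>"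
      using shrinks unfolding approx_proj_shrinks_sequentially by simp
    then show ?thesis
      by eventually_elim (use \<open>ball u \<epsilon> \<subseteq> W\<close> in blast)
  qed
  moreover have "?P n \<inter> W \<noteq> {}" if "u \<in> W" for n W
    using that assms metric_proj_subset_approx_proj[of "1 / real n"] by auto
  ultimately show "metric_proj A x = {u} \<and> vietoris_conv ?P (metric_proj A x)"
    using metric_proj_eq_singleton_if_shrinks[OF assms shrinks] unfolding vietoris_conv_def by auto
next
  assume "metric_proj A x = {u} \<and> vietoris_conv (\<lambda>n. approx_proj A x (1 / real n)) (metric_proj A x)"
  then show "approx_proj_shrinks A x u"
    unfolding vietoris_conv_def approx_proj_shrinks_sequentially by simp
qed

lemma enlarge_singleton: "enlarge {u} \<epsilon> = cball u \<epsilon>"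
  unfolding enlarge_def
proof (intro set_eqI iffI)
  fix y
  assume "y \<in> {a + b |a b. a \<in> {u} \<and> b \<in> cball 0 \<epsilon>}"
  then show "y \<in> cball u \<epsilon>"
    by (auto simp: dist_norm)
next
  fix y
  assume "y \<in> cball u \<epsilon>"
  then have "y = u + (y - u) \<and> u \<in> {u} \<and> y - u \<in> cball 0 \<epsilon>"
    by (simp add: dist_norm norm_minus_commute)
  then show "y \<in> {a + b |a b. a \<in> {u} \<and> b \<in> cball 0 \<epsilon>}"
    by blast
qed

lemma all_ball_iff_all_cball:
  assumes mono: "\<And>S T. S \<subseteq> T \<Longrightarrow> Q S \<Longrightarrow> Q T"
  shows "(\<forall>\<epsilon>>0. Q (ball u \<epsilon>)) \<longleftrightarrow> (\<forall>\<epsilon>>0. Q (cball u \<epsilon>))"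
proof (intro iffI allI impI)
  fix \<epsilon> :: real
  assume "\<forall>\<epsilon>>0. Q (ball u \<epsilon>)" "\<epsilon> > 0"
  then show "Q (cball u \<epsilon>)"
    using mono[OF ball_subset_cball] by blast
next
  fix \<epsilon> :: real
  assume "\<forall>\<epsilon>>0. Q (cball u \<epsilon>)" "\<epsilon> > 0"
  then have "Q (cball u (\<epsilon> / 2))"
    by simp
  moreover have "cball u (\<epsilon> / 2) \<subseteq> ball u \<epsilon>"
    using \<open>\<epsilon> > 0\<close> by auto
  ultimately show "Q (ball u \<epsilon>)"
    using mono by blast
qed

lemma approx_proj_shrinks_cball:
  "approx_proj_shrinks A x u \<longleftrightarrow> (\<forall>\<epsilon>>0. \<exists>\<delta>>0. approx_proj A x \<delta> \<subseteq> cball u \<epsilon>)"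
  unfolding approx_proj_shrinks_def
  by (rule all_ball_iff_all_cball[where Q = "\<lambda>S. \<exists>\<delta>>0. approx_proj A x \<delta> \<subseteq> S"]) blast

lemma approx_proj_shrinks_sequentially_cball:
  "approx_proj_shrinks A x u \<longleftrightarrow>
     (\<forall>\<epsilon>>0. \<forall>\<^sub>F n in sequentially. approx_proj A x (1 / real n) \<subseteq> cball u \<epsilon>)"
  unfolding approx_proj_shrinks_sequentially
  by (rule all_ball_iff_all_cball[where Q = "\<lambda>S. \<forall>\<^sub>F n in sequentially. approx_proj A x (1 / real n) \<subseteq> S"])
    (erule eventually_mono, blast)

lemma approx_proj_shrinks_iff_hausdorff:
  assumes "u \<in> metric_proj A x"
  shows "approx_proj_shrinks A x u \<longleftrightarrow>
    metric_proj A x = {u} \<and> hausdorff_conv (\<lambda>n. approx_proj A x (1 / real n)) (metric_proj A x)"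
proof -
  let ?P = "\<lambda>n. approx_proj A x (1 / real n)"
  have "{u} \<subseteq> enlarge (?P n) \<epsilon>" if "\<epsilon> > 0" for n \<epsilon>
  proof -
    have "u \<in> ?P n"
      using assms metric_proj_subset_approx_proj[of "1 / real n"] by auto
    then have "u + 0 \<in> enlarge (?P n) \<epsilon>"
      unfolding enlarge_def using \<open>\<epsilon> > 0\<close> by fastforce
    then show ?thesis
      by simp
  qed
  then have "hausdorff_conv ?P {u} \<longleftrightarrow> (\<forall>\<epsilon>>0. \<forall>\<^sub>F n in sequentially. ?P n \<subseteq> cball u \<epsilon>)"
    unfolding hausdorff_conv_def enlarge_singleton by simp
  then show ?thesis
    using metric_proj_eq_singleton_if_shrinks[OF assms] approx_proj_shrinks_sequentially_cball by metis
qed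

lemma approx_proj_shrinks_iff_strongly_chebyshev_at:
  assumes "u \<in> metric_proj A x"
  shows "approx_proj_shrinks A x u \<longleftrightarrow>
    (\<exists>y. metric_proj A x = {y}) \<and> (\<forall>\<epsilon>>0. \<exists>\<delta>>0. approx_proj A x \<delta> \<subseteq> enlarge (metric_proj A x) \<epsilon>)"
proof -
  have "(\<exists>y. metric_proj A x = {y}) \<longleftrightarrow> metric_proj A x = {u}"
    using assms by auto
  then show ?thesis
    using metric_proj_eq_singleton_if_shrinks[OF assms]
    by (metis approx_proj_shrinks_cball enlarge_singleton)
qed

lemma rad_approx_proj_tendsto_iff:
  assumes "\<And>x. x \<in> D \<Longrightarrow> p x \<in> metric_proj A x"
  shows "(\<forall>x\<in>D. \<forall>x'\<in>D.
      (\<lambda>n. rad (approx_proj A x (1 / real n)) (approx_proj A x' (1 / real n))) \<longlonglongrightarrow> dist (p x) (p x'))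
    \<longleftrightarrow> (\<forall>x\<in>D. approx_proj_shrinks A x (p x))"
proof safe
  fix x
  assume "x \<in> D"
    and "\<forall>x\<in>D. \<forall>x'\<in>D.
      (\<lambda>n. rad (approx_proj A x (1 / real n)) (approx_proj A x' (1 / real n))) \<longlonglongrightarrow> dist (p x) (p x')"
  then have "(\<lambda>n. rad (approx_proj A x (1 / real n)) (approx_proj A x (1 / real n))) \<longlonglongrightarrow> 0"
    by fastforce
  moreover have "approx_proj A x (1 / real n) \<noteq> {}" for n
    using assms[OF \<open>x \<in> D\<close>] metric_proj_subset_approx_proj[of "1 / real n" A x] by auto
  ultimately have "(\<lambda>n. diameter (approx_proj A x (1 / real n))) \<longlonglongrightarrow> 0"
    by (simp add: rad_self_eq_diameter bounded_approx_proj)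
  then show "approx_proj_shrinks A x (p x)"
    using approx_proj_shrinks_iff_diameter[OF assms[OF \<open>x \<in> D\<close>]] by simp
next
  fix x x'
  assume "\<forall>x\<in>D. approx_proj_shrinks A x (p x)" "x \<in> D" "x' \<in> D"
  then show "(\<lambda>n. rad (approx_proj A x (1 / real n)) (approx_proj A x' (1 / real n))) \<longlonglongrightarrow> dist (p x) (p x')"
    using assms by (intro rad_approx_proj_tendsto) auto
qed

lemma strongly_chebyshev_on_iff_approx_proj_shrinks:
  assumes "\<And>x. x \<in> D \<Longrightarrow> p x \<in> metric_proj A x"
  shows "strongly_chebyshev_on A D \<longleftrightarrow> (\<forall>x\<in>D. approx_proj_shrinks A x (p x))"
  unfolding strongly_chebyshev_on_def using approx_proj_shrinks_iff_strongly_chebyshev_at[OF assms]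
  by blast

section \<open>The unit sphere and local uniform rotundity\<close>

lemma dist_normalize:
  fixes x :: "'a::real_normed_vector"
  assumes "x \<noteq> 0"
  shows "dist x (x /\<^sub>R norm x) = \<bar>norm x - 1\<bar>"
proof -
  have "x - x /\<^sub>R norm x = (1 - 1 / norm x) *\<^sub>R x"
    by (simp add: algebra_simps divide_inverse)
  then have "dist x (x /\<^sub>R norm x) = \<bar>(1 - 1 / norm x) * norm x\<bar>"
    by (simp add: dist_norm abs_mult)
  also have "(1 - 1 / norm x) * norm x = norm x - 1"
    using assms by (simp add: field_simps)
  finally show ?thesis .
qed

lemma infdist_unit_sphere:
  fixes x :: "'a::real_normed_vector"
  assumes "x \<noteq> 0"
  shows "infdist x (sphere 0 1) = \<bar>norm x - 1\<bar>"
proof (rule antisym)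
  have u: "x /\<^sub>R norm x \<in> sphere 0 1"
    using assms by simp
  then show "infdist x (sphere 0 1) \<le> \<bar>norm x - 1\<bar>"
    using infdist_le dist_normalize[OF assms] by metis
  have lower: "\<bar>norm x - 1\<bar> \<le> dist x z" if "z \<in> sphere 0 1" for z
    using that norm_triangle_ineq3[of x z] by (simp add: dist_norm)
  have "sphere (0::'a) 1 \<noteq> {}"
    using u by blast
  then show "\<bar>norm x - 1\<bar> \<le> infdist x (sphere 0 1)"
    unfolding infdist_notempty[OF \<open>sphere 0 1 \<noteq> {}\<close>] using lower by (rule cINF_greatest)
qed

lemma normalize_in_metric_proj_sphere:
  fixes x :: "'a::real_normed_vector"
  assumes "x \<noteq> 0"
  shows "x /\<^sub>R norm x \<in> metric_proj (sphere 0 1) x"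
  using assms unfolding metric_proj_def approx_proj_infdist
  by (simp add: infdist_unit_sphere dist_normalize)

lemma norm_normalize_add_ge:
  fixes x y :: "'a::real_normed_vector"
  assumes x: "x \<noteq> 0" and y: "y \<in> approx_proj (sphere 0 1) x \<delta>"
  shows "2 - max 1 (1 / norm x) * \<delta> \<le> norm (x /\<^sub>R norm x + y)"
proof -
  let ?u = "x /\<^sub>R norm x" and ?t = "norm x"
  have t: "?t > 0"
    using x by simp
  have ny: "norm y = 1" and near: "norm (x - y) \<le> \<bar>?t - 1\<bar> + \<delta>"
    using y by (simp_all add: approx_proj_infdist infdist_unit_sphere[OF x] dist_norm)
  have nu: "norm (x - ?u) = \<bar>?t - 1\<bar>"
    using dist_normalize[OF x] by (simp add: dist_norm)
  show ?thesis
  proof (cases "?t \<ge> 1")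
    case True
    have "x - (?u + y) /\<^sub>R 2 = ((x - ?u) + (x - y)) /\<^sub>R 2"
      by (simp add: algebra_simps flip: scaleR_add_left)
    then have "norm (x - (?u + y) /\<^sub>R 2) \<le> (norm (x - ?u) + norm (x - y)) / 2"
      using norm_triangle_ineq[of "x - ?u" "x - y"] by simp
    also have "\<dots> \<le> ?t - 1 + \<delta> / 2"
      using nu near True by simp
    finally have "?t - norm ((?u + y) /\<^sub>R 2) \<le> ?t - 1 + \<delta> / 2"
      using norm_triangle_ineq2[of x "(?u + y) /\<^sub>R 2"] by linarith
    then have "2 - \<delta> \<le> norm (?u + y)"
      by simp
    moreover have "max 1 (1 / ?t) = 1"
      using True t by (simp add: field_simps)
    ultimately show ?thesis
      by simp
  next
    case False
    have "?t *\<^sub>R (?u + y) = (x - y) + (1 + ?t) *\<^sub>R y"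
      using t by (simp add: algebra_simps)
    then have "?t * norm (?u + y) = norm ((x - y) + (1 + ?t) *\<^sub>R y)"
      using t by (metis norm_scaleR abs_of_pos)
    also have "\<dots> \<ge> (1 + ?t) - norm (x - y)"
      using norm_triangle_ineq4[of "(x - y) + (1 + ?t) *\<^sub>R y" "x - y"] ny t by simp
    finally have "2 * ?t - \<delta> \<le> ?t * norm (?u + y)"
      using near False by simp
    then have "2 - \<delta> / ?t \<le> norm (?u + y)"
      using t by (simp add: field_simps)
    moreover have "max 1 (1 / ?t) * \<delta> = \<delta> / ?t"
      using False t by (simp add: field_simps max_def)
    ultimately show ?thesis
      by linarith
  qed
qed

lemma LUR_minimizing_seq_tendsto:
  fixes x :: "'a::real_normed_vector"
  assumes "LUR TYPE('a)" and x: "x \<noteq> 0" and "minimizing_seq (sphere 0 1) x y"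
  shows "y \<longlonglongrightarrow> x /\<^sub>R norm x"
proof -
  let ?u = "x /\<^sub>R norm x" and ?c = "max 1 (1 / norm x)"
  let ?gap = "\<lambda>n. dist x (y n) - infdist x (sphere 0 1)"
  have yS: "\<And>n. y n \<in> sphere 0 1" and "(\<lambda>n. dist x (y n)) \<longlonglongrightarrow> infdist x (sphere 0 1)"
    using assms(3) by (simp_all add: minimizing_seq_infdist)
  then have "?gap \<longlonglongrightarrow> 0"
    by (simp add: LIM_zero)
  then have "(\<lambda>n. (2 - ?c * ?gap n) / 2) \<longlonglongrightarrow> (2 - ?c * 0) / 2"
    by (intro tendsto_divide tendsto_diff tendsto_mult tendsto_const) simp_all
  then have lower_lim: "(\<lambda>n. (2 - ?c * ?gap n) / 2) \<longlonglongrightarrow> 1"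
    by simp
  have lower: "(2 - ?c * ?gap n) / 2 \<le> norm ((y n + ?u) /\<^sub>R 2)" for n
  proof -
    have "y n \<in> approx_proj (sphere 0 1) x (?gap n)"
      using yS by (simp add: approx_proj_infdist)
    from norm_normalize_add_ge[OF x this] show ?thesis
      by (simp add: add.commute)
  qed
  have upper: "norm ((y n + ?u) /\<^sub>R 2) \<le> 1" for n
    using norm_triangle_ineq[of "y n" ?u] yS[of n] x by simp
  have "(\<lambda>n. norm ((y n + ?u) /\<^sub>R 2)) \<longlonglongrightarrow> 1"
    by (rule tendsto_sandwich[OF always_eventually always_eventually lower_lim tendsto_const])
      (use lower upper in auto)
  moreover have "?u \<in> sphere 0 1"
    using x by simp
  ultimately show ?thesis
    using assms(1) yS unfolding LUR_def by blast
qed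

lemma dist_radial_retraction:
  fixes m u :: "'a::real_normed_vector"
  assumes "norm u = 1"
  shows "dist m (if m = 0 then u else m /\<^sub>R norm m) = \<bar>1 - norm m\<bar>"
proof (cases "m = 0")
  case True
  then show ?thesis
    using assms by simp
next
  case False
  then show ?thesis
    using dist_normalize[OF False] by (simp add: abs_minus_commute)
qed

lemma minimizing_seq_radial_midpoints:
  fixes u :: "'a::real_normed_vector"
  assumes u: "u \<in> sphere 0 1" and ys: "\<forall>n. ys n \<in> sphere 0 1"
    and lim: "(\<lambda>n. norm ((ys n + u) /\<^sub>R 2)) \<longlonglongrightarrow> 1"
  defines "m \<equiv> \<lambda>n. (ys n + u) /\<^sub>R 2"
  \<comment> \<open>u is an arbitrary point of the sphere, used only where m n = 0\<close>
  defines "w \<equiv> \<lambda>n. if m n = 0 then u else m n /\<^sub>R norm (m n)"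
  shows "minimizing_seq (sphere 0 1) (u /\<^sub>R 2) w" and "(\<lambda>n. m n - w n) \<longlonglongrightarrow> 0"
proof -
  let ?x = "u /\<^sub>R 2"
  have "?x \<noteq> 0" "norm ?x = 1 / 2"
    using u by auto
  then have x_dist: "infdist ?x (sphere 0 1) = 1 / 2"
    using infdist_unit_sphere[of ?x] by simp
  have wS: "w n \<in> sphere 0 1" for n
    using u by (simp add: w_def)
  have mw: "dist (m n) (w n) = \<bar>1 - norm (m n)\<bar>" for n
    using dist_radial_retraction[of u "m n"] u unfolding w_def by simp
  have xm: "dist ?x (m n) = 1 / 2" for n
  proof -
    have "?x - m n = (u - (ys n + u)) /\<^sub>R 2"
      unfolding m_def by (rule scaleR_diff_right[symmetric])
    then show ?thesis
      using ys by (simp add: dist_norm)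
  qed
  have gap: "(\<lambda>n. \<bar>1 - norm (m n)\<bar>) \<longlonglongrightarrow> 0"
    using tendsto_rabs[OF tendsto_diff[OF tendsto_const[of 1] lim]] by (simp add: m_def)
  have "(\<lambda>n. dist ?x (w n)) \<longlonglongrightarrow> 1 / 2"
  proof (rule tendsto_sandwich[OF always_eventually always_eventually tendsto_const])
    show "(\<lambda>n. 1 / 2 + \<bar>1 - norm (m n)\<bar>) \<longlonglongrightarrow> 1 / 2"
      using tendsto_add[OF tendsto_const gap] by simp
    show "\<forall>n. 1 / 2 \<le> dist ?x (w n)"
    proof
      fix n
      show "1 / 2 \<le> dist ?x (w n)"
        using infdist_le[OF wS[of n], of ?x] x_dist by simp
    qed
    show "\<forall>n. dist ?x (w n) \<le> 1 / 2 + \<bar>1 - norm (m n)\<bar>"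
    proof
      fix n
      show "dist ?x (w n) \<le> 1 / 2 + \<bar>1 - norm (m n)\<bar>"
        using dist_triangle[of ?x "w n" "m n"] xm[of n] mw[of n] by simp
    qed
  qed
  then show "minimizing_seq (sphere 0 1) ?x w"
    unfolding minimizing_seq_infdist x_dist using wS by simp
  show "(\<lambda>n. m n - w n) \<longlonglongrightarrow> 0"
  proof (rule tendsto_norm_zero_cancel)
    have "norm (m n - w n) = \<bar>1 - norm (m n)\<bar>" for n
      using mw[of n] by (simp only: dist_norm)
    with gap show "(\<lambda>n. norm (m n - w n)) \<longlonglongrightarrow> 0"
      by simp
  qed
qed

lemma LUR_if_minimizing_seq_tendsto:
  assumes conv: "\<And>(x::'a::real_normed_vector) y.
    x \<noteq> 0 \<Longrightarrow> minimizing_seq (sphere 0 1) x y \<Longrightarrow> y \<longlonglongrightarrow> x /\<^sub>R norm x"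
  shows "LUR TYPE('a)"
  unfolding LUR_def
proof (intro allI impI, elim conjE)
  fix u :: 'a and ys :: "nat \<Rightarrow> 'a"
  assume u: "u \<in> sphere 0 1" and ys: "\<forall>n. ys n \<in> sphere 0 1"
    and lim: "(\<lambda>n. norm ((ys n + u) /\<^sub>R 2)) \<longlonglongrightarrow> 1"
  let ?m = "\<lambda>n. (ys n + u) /\<^sub>R 2"
  let ?w = "\<lambda>n. if ?m n = 0 then u else ?m n /\<^sub>R norm (?m n)"
  have x: "u /\<^sub>R 2 \<noteq> 0" "(u /\<^sub>R 2) /\<^sub>R norm (u /\<^sub>R 2) = u"
    using u by auto
  have "?w \<longlonglongrightarrow> u"
    using conv[OF x(1) minimizing_seq_radial_midpoints(1)[OF u ys lim]] unfolding x(2) .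
  then have "(\<lambda>n. ?w n + (?m n - ?w n)) \<longlonglongrightarrow> u + 0"
    using minimizing_seq_radial_midpoints(2)[OF u ys lim] by (rule tendsto_add)
  then have "(\<lambda>n. 2 *\<^sub>R ?m n - u) \<longlonglongrightarrow> 2 *\<^sub>R u - u"
    by (intro tendsto_diff tendsto_scaleR tendsto_const) simp_all
  then show "ys \<longlonglongrightarrow> u"
    by (simp add: scaleR_2)
qed

lemma LUR_iff_approx_proj_shrinks_sphere:
  "LUR TYPE('a::real_normed_vector) \<longleftrightarrow>
    (\<forall>x::'a. x \<noteq> 0 \<longrightarrow> approx_proj_shrinks (sphere 0 1) x (x /\<^sub>R norm x))"
  unfolding approx_proj_shrinks_iff_minimizing_seq
proof (intro iffI allI impI)
  fix x :: 'a and y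
  assume "LUR TYPE('a)" "x \<noteq> 0" "minimizing_seq (sphere 0 1) x y"
  then show "y \<longlonglongrightarrow> x /\<^sub>R norm x"
    by (rule LUR_minimizing_seq_tendsto)
next
  assume "\<forall>x::'a. x \<noteq> 0 \<longrightarrow> (\<forall>y. minimizing_seq (sphere 0 1) x y \<longrightarrow> y \<longlonglongrightarrow> x /\<^sub>R norm x)"
  then show "LUR TYPE('a)"
    by (intro LUR_if_minimizing_seq_tendsto) simp
qed

theorem corollary3p8:
  fixes X :: "'a::banach itself"
  defines "S \<equiv> sphere (0::'a) 1"
  shows
   "(LUR X \<longleftrightarrow>
      (\<forall>x x'. x \<noteq> 0 \<and> x' \<noteq> 0 \<longrightarrow>
         (\<lambda>n. rad (approx_proj S x (1 / real n)) (approx_proj S x' (1 / real n)))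
           \<longlonglongrightarrow> norm (x /\<^sub>R norm x - x' /\<^sub>R norm x')))
    \<and> (LUR X \<longleftrightarrow>
      (\<forall>x. x \<noteq> 0 \<longrightarrow> (\<lambda>n. diameter (approx_proj S x (1 / real n))) \<longlonglongrightarrow> 0))
    \<and> (LUR X \<longleftrightarrow>
      (\<forall>x. x \<noteq> 0 \<longrightarrow> (\<forall>y. minimizing_seq S x y \<longrightarrow> y \<longlonglongrightarrow> x /\<^sub>R norm x)))
    \<and> (LUR X \<longleftrightarrow>
      (\<forall>x. x \<noteq> 0 \<longrightarrow> metric_proj S x = {x /\<^sub>R norm x} \<and>
          vietoris_conv (\<lambda>n. approx_proj S x (1 / real n)) (metric_proj S x)))
    \<and> (LUR X \<longleftrightarrow>
      (\<forall>x. x \<noteq> 0 \<longrightarrow> metric_proj S x = {x /\<^sub>R norm x} \<and>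
          hausdorff_conv (\<lambda>n. approx_proj S x (1 / real n)) (metric_proj S x)))
    \<and> (LUR X \<longleftrightarrow> strongly_chebyshev_on S (UNIV - {0}))"
proof -
  let ?u = "\<lambda>x::'a. x /\<^sub>R norm x"
  let ?shrinks = "\<forall>x. x \<noteq> 0 \<longrightarrow> approx_proj_shrinks S x (?u x)"
  have proj: "x \<noteq> 0 \<Longrightarrow> ?u x \<in> metric_proj S x" for x
    unfolding S_def by (rule normalize_in_metric_proj_sphere)
  have "LUR X \<longleftrightarrow> LUR TYPE('a)"
    unfolding LUR_def ..
  then have LUR: "LUR X \<longleftrightarrow> ?shrinks"
    unfolding S_def LUR_iff_approx_proj_shrinks_sphere .
  have rad: "(\<forall>x x'. x \<noteq> 0 \<and> x' \<noteq> 0 \<longrightarrow>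
      (\<lambda>n. rad (approx_proj S x (1 / real n)) (approx_proj S x' (1 / real n)))
        \<longlonglongrightarrow> norm (?u x - ?u x')) \<longleftrightarrow> ?shrinks"
    using rad_approx_proj_tendsto_iff[of "UNIV - {0}" ?u S] proj by (simp add: dist_norm Ball_def imp_conjL)
  have chebyshev: "strongly_chebyshev_on S (UNIV - {0}) \<longleftrightarrow> ?shrinks"
    using strongly_chebyshev_on_iff_approx_proj_shrinks[of "UNIV - {0}" ?u S] proj by (simp add: Ball_def)
  show ?thesis
    unfolding LUR rad chebyshev
    by (simp add: approx_proj_shrinks_iff_minimizing_seq approx_proj_shrinks_iff_diameter[OF proj, symmetric]
      approx_proj_shrinks_iff_vietoris[OF proj, symmetric] approx_proj_shrinks_iff_hausdorff[OF proj, symmetric])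
qed

end
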